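(* Let $(\Phi,D)$ be a domain-free information algebra whose lattice $D$ has a top element. Then $(\Phi,D)$ is continuous (resp. s-continuous) if and only if there exists a set $\Upsilon\subseteq\Phi$ containing the empty information $e$ such that: (convergency) every directed subset $X\subseteq\Upsilon$ has a supremum $\vee X$; and (D2) for every $\phi\in\Phi$, the set $\{\psi\in\Upsilon:\psi\ll\phi\}$ is directed and $\phi=\vee\{\psi\in\Upsilon:\psi\ll\phi\}$ (resp. (SD2) for every $\phi\in\Phi$ and $x\in D$, the set $\{\psi\in\Upsilon:\psi=\psi^{\Rightarrow x}\ll\phi\}$ is directed and $\phi^{\Rightarrow x}=\vee\{\psi\in\Upsilon:\psi=\psi^{\Rightarrow x}\ll\phi\}$).
   Context: A domain-free information algebra $(\Phi,D)$ consists of a set $\Phi$, a lattice $D$, a combination $\otimes:\Phi\times\Phi\to\Phi$ and a focusing $\Phi\times D\to\Phi$, $(\psi,x)\mapsto\psi^{\Rightarrow x}$, such that: (1) $\otimes$ is associative and commutative and has a neutral element $e$ (the empty information); (2) $(\psi^{\Rightarrow y})^{\Rightarrow x}=\psi^{\Rightarrow x\wedge y}$; (3) $(\phi^{\Rightarrow x}\otimes\psi)^{\Rightarrow x}=\phi^{\Rightarrow x}\otimes\psi^{\Rightarrow x}$; (4) for every $\psi$ there is $x\in D$ with $\psi^{\Rightarrow x}=\psi$; (5) $\psi\otimes\psi^{\Rightarrow x}=\psi$. $\Phi$ is partially ordered by $\psi\le\phi$ iff $\psi\otimes\phi=\phi$; suprema $\vee$ are with respect to this order. $a\ll b$ ($a$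 way-below $b$) means: for every directed set $X$ with $b\le\vee X$ there is $c\in X$ with $a\le c$. $(\Phi,D)$ (with $D$ having a top element) is called continuous (resp. s-continuous) if there exists a basis $\Gamma\subseteq\Phi$, closed under combination and containing $e$, such that every directed $X\subseteq\Gamma$ has a supremum in $\Phi$, and $\phi=\vee\{\psi\in\Gamma:\psi\ll\phi\}$ for all $\phi\in\Phi$ (resp. $\phi^{\Rightarrow x}=\vee\{\psi\in\Gamma:\psi=\psi^{\Rightarrow x}\ll\phi\}$ for all $\phi\in\Phi$, $x\in D$). *)

theory Defs
  imports Main
begin

text \<open>A domain-free information algebra: information elements of type 'a (the set Phi is the
whole type), the lattice D is the type 'd; combination comb, focusing foc, neutral element e.\<close>

definition info_algebra ::
  "('a \<Rightarrow> 'a \<Rightarrow> 'a) \<Rightarrow> ('a \<Rightarrow> 'd::lattice \<Rightarrow> 'a) \<Rightarrow> 'a \<Rightarrow> bool" where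
  "info_algebra comb foc e \<longleftrightarrow>
     (\<forall>a b c. comb (comb a b) c = comb a (comb b c)) \<and>
     (\<forall>a b. comb a b = comb b a) \<and>
     (\<forall>a. comb a e = a) \<and>
     (\<forall>psi x y. foc (foc psi y) x = foc psi (inf x y)) \<and>
     (\<forall>phi psi x. foc (comb (foc phi x) psi) x = comb (foc phi x) (foc psi x)) \<and>
     (\<forall>psi. \<exists>x. foc psi x = psi) \<and>
     (\<forall>psi x. comb psi (foc psi x) = psi)"

definition info_le :: "('a \<Rightarrow> 'a \<Rightarrow> 'a) \<Rightarrow> 'a \<Rightarrow> 'a \<Rightarrow> bool" where
  "info_le comb psi phi \<longleftrightarrow> comb psi phi = phi"

definition info_lub :: "('a \<Rightarrow> 'a \<Rightarrow> 'a) \<Rightarrow> 'a set \<Rightarrow> 'a \<Rightarrow> bool" where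
  "info_lub comb X s \<longleftrightarrow>
     (\<forall>a\<in>X. info_le comb a s) \<and> (\<forall>u. (\<forall>a\<in>X. info_le comb a u) \<longrightarrow> info_le comb s u)"

definition info_directed :: "('a \<Rightarrow> 'a \<Rightarrow> 'a) \<Rightarrow> 'a set \<Rightarrow> bool" where
  "info_directed comb X \<longleftrightarrow> X \<noteq> {} \<and>
     (\<forall>a\<in>X. \<forall>b\<in>X. \<exists>c\<in>X. info_le comb a c \<and> info_le comb b c)"

definition way_below :: "('a \<Rightarrow> 'a \<Rightarrow> 'a) \<Rightarrow> 'a \<Rightarrow> 'a \<Rightarrow> bool" where
  "way_below comb a b \<longleftrightarrow>
     (\<forall>X s. info_directed comb X \<and> info_lub comb X s \<and> info_le comb b s \<longrightarrow>
        (\<exists>c\<in>X. info_le comb a c))"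

definition continuous_ia ::
  "('a \<Rightarrow> 'a \<Rightarrow> 'a) \<Rightarrow> ('a \<Rightarrow> 'd::{lattice,order_top} \<Rightarrow> 'a) \<Rightarrow> 'a \<Rightarrow> bool" where
  "continuous_ia comb foc e \<longleftrightarrow>
     (\<exists>G. e \<in> G \<and> (\<forall>a\<in>G. \<forall>b\<in>G. comb a b \<in> G) \<and>
        (\<forall>X. X \<subseteq> G \<and> info_directed comb X \<longrightarrow> (\<exists>s. info_lub comb X s)) \<and>
        (\<forall>phi. info_lub comb {psi \<in> G. way_below comb psi phi} phi))"

definition s_continuous_ia ::
  "('a \<Rightarrow> 'a \<Rightarrow> 'a) \<Rightarrow> ('a \<Rightarrow> 'd::{lattice,order_top} \<Rightarrow> 'a) \<Rightarrow> 'a \<Rightarrow> bool" where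
  "s_continuous_ia comb foc e \<longleftrightarrow>
     (\<exists>G. e \<in> G \<and> (\<forall>a\<in>G. \<forall>b\<in>G. comb a b \<in> G) \<and>
        (\<forall>X. X \<subseteq> G \<and> info_directed comb X \<longrightarrow> (\<exists>s. info_lub comb X s)) \<and>
        (\<forall>phi x. info_lub comb {psi \<in> G. foc psi x = psi \<and> way_below comb psi phi} (foc phi x)))"

end

theory Submission
  imports Defs
begin

text \<open>A basis \<open>\<Gamma>\<close> itself serves as \<open>\<Upsilon>\<close>: since \<open>e \<ll> \<phi>\<close> always holds and the elements way below \<open>\<phi>\<close>
  are closed under combination, the approximating subsets of \<open>\<Gamma>\<close> are directed.
  Conversely, \<open>\<Upsilon>\<close> need not be closed under combination, so take all of \<open>\<Phi>\<close> as the basis.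
  Every directed \<open>X \<subseteq> \<Phi>\<close> then has a supremum, namely that of the directed set of all \<open>\<psi> \<in> \<Upsilon>\<close> way
  below some element of \<open>X\<close>; and the way-below set of \<open>\<phi>\<close> in \<open>\<Phi>\<close> lies between that in \<open>\<Upsilon>\<close> and \<open>\<phi>\<close>,
  so it has the same supremum. For s-continuity, (SD2) at the top of \<open>D\<close> gives (D2).\<close>

definition has_directed_sups :: "('a \<Rightarrow> 'a \<Rightarrow> 'a) \<Rightarrow> 'a set \<Rightarrow> bool" where
  "has_directed_sups comb U \<longleftrightarrow>
     (\<forall>X. X \<subseteq> U \<and> info_directed comb X \<longrightarrow> (\<exists>s. info_lub comb X s))"

definition approximates :: "('a \<Rightarrow> 'a \<Rightarrow> 'a) \<Rightarrow> 'a set \<Rightarrow> bool" where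
  "approximates comb U \<longleftrightarrow>
     (\<forall>phi. info_directed comb {psi \<in> U. way_below comb psi phi} \<and>
            info_lub comb {psi \<in> U. way_below comb psi phi} phi)"

definition s_approximates :: "('a \<Rightarrow> 'a \<Rightarrow> 'a) \<Rightarrow> ('a \<Rightarrow> 'd \<Rightarrow> 'a) \<Rightarrow> 'a set \<Rightarrow> bool" where
  "s_approximates comb foc U \<longleftrightarrow>
     (\<forall>phi x. info_directed comb {psi \<in> U. psi = foc psi x \<and> way_below comb psi phi} \<and>
              info_lub comb {psi \<in> U. psi = foc psi x \<and> way_below comb psi phi} (foc phi x))"

lemma info_lub_superset:
  assumes "info_lub comb A s" "A \<subseteq> B" "\<forall>b\<in>B. info_le comb b s"
  shows "info_lub comb B s"
  using assms unfolding info_lub_def by blast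

locale info_alg =
  fixes comb :: "'a \<Rightarrow> 'a \<Rightarrow> 'a" and foc :: "'a \<Rightarrow> 'd::{lattice,order_top} \<Rightarrow> 'a" and e :: 'a
  assumes info_algebra: "info_algebra comb foc e"
begin

lemma comb_assoc: "comb (comb a b) c = comb a (comb b c)"
  using info_algebra unfolding info_algebra_def by blast

lemma comb_commute: "comb a b = comb b a"
  using info_algebra unfolding info_algebra_def by blast

lemma comb_neutral: "comb a e = a"
  using info_algebra unfolding info_algebra_def by blast

lemma foc_foc: "foc (foc psi y) x = foc psi (inf x y)"
  using info_algebra unfolding info_algebra_def by blast

lemma foc_comb_foc: "foc (comb (foc phi x) psi) x = comb (foc phi x) (foc psi x)"
  using info_algebra unfolding info_algebra_def by blast

lemma foc_support: "\<exists>x. foc psi x = psi"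
  using info_algebra unfolding info_algebra_def by blast

lemma comb_foc_absorb: "comb psi (foc psi x) = psi"
  using info_algebra unfolding info_algebra_def by blast

lemma comb_idem: "comb a a = a"
  by (metis comb_foc_absorb foc_support)

lemma info_le_refl: "info_le comb a a"
  by (simp add: info_le_def comb_idem)

lemma info_le_trans: "info_le comb a b \<Longrightarrow> info_le comb b c \<Longrightarrow> info_le comb a c"
  unfolding info_le_def by (metis comb_assoc)

lemma e_info_le: "info_le comb e a"
  unfolding info_le_def by (metis comb_commute comb_neutral)

lemma info_le_comb1: "info_le comb a (comb a b)"
  unfolding info_le_def by (metis comb_assoc comb_idem)

lemma info_le_comb2: "info_le comb b (comb a b)"
  using info_le_comb1 comb_commute by metis

lemma comb_info_le: "info_le comb a c \<Longrightarrow> info_le comb b c \<Longrightarrow> info_le comb (comb a b) c"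
  unfolding info_le_def by (metis comb_assoc)

lemma foc_info_le: "info_le comb (foc psi x) psi"
  unfolding info_le_def by (metis comb_commute comb_foc_absorb)

lemma foc_mono:
  assumes "info_le comb psi phi"
  shows "info_le comb (foc psi x) (foc phi x)"
proof -
  have "comb (foc psi x) phi = phi"
    using assms foc_info_le info_le_trans unfolding info_le_def by metis
  then have "comb (foc psi x) (foc phi x) = foc phi x"
    using foc_comb_foc[of psi x phi] by simp
  then show ?thesis
    unfolding info_le_def .
qed

lemma foc_e: "foc e x = e"
  by (metis comb_commute comb_foc_absorb comb_neutral)

lemma foc_top: "foc phi top = phi"
proof -
  obtain y where "foc phi y = phi"
    using foc_support by blast
  then show ?thesis
    using foc_foc[of phi y top] inf_absorb2[OF top_greatest, of y] by simp
qed

lemma foc_comb_fixed: "foc a x = a \<Longrightarrow> foc b x = b \<Longrightarrow> foc (comb a b) x = comb a b"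
  using foc_comb_foc[of a x b] by simp

lemma way_below_imp_info_le:
  assumes "way_below comb a b"
  shows "info_le comb a b"
proof -
  have "info_directed comb {b}" "info_lub comb {b} b"
    by (simp_all add: info_directed_def info_lub_def info_le_refl)
  then show ?thesis
    using assms info_le_refl unfolding way_below_def by blast
qed

lemma way_below_info_le_trans: "way_below comb a b \<Longrightarrow> info_le comb b c \<Longrightarrow> way_below comb a c"
  unfolding way_below_def by (meson info_le_trans)

lemma e_way_below: "way_below comb e b"
  unfolding way_below_def info_directed_def using e_info_le by blast

lemma way_below_comb:
  assumes "way_below comb a p" "way_below comb b p"
  shows "way_below comb (comb a b) p"
  unfolding way_below_def
proof (intro allI impI)
  fix X s
  assume X: "info_directed comb X \<and> info_lub comb X s \<and> info_le comb p s"
  obtain c1 c2 where "c1 \<in> X" "info_le comb a c1" "c2 \<in> X" "info_le comb b c2"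
    using assms X unfolding way_below_def by meson
  moreover obtain c3 where "c3 \<in> X" "info_le comb c1 c3" "info_le comb c2 c3"
    using X calculation unfolding info_directed_def by blast
  ultimately show "\<exists>c\<in>X. info_le comb (comb a b) c"
    by (meson comb_info_le info_le_trans)
qed

lemma directed_way_below_restricted:
  assumes "e \<in> G" "\<forall>a\<in>G. \<forall>b\<in>G. comb a b \<in> G" "P e" "\<And>a b. P a \<Longrightarrow> P b \<Longrightarrow> P (comb a b)"
  shows "info_directed comb {psi \<in> G. P psi \<and> way_below comb psi phi}"
  unfolding info_directed_def
  using assms e_way_below way_below_comb info_le_comb1 info_le_comb2 by blast

lemma directed_way_below_union:
  assumes "approximates comb U" "info_directed comb X"
  shows "info_directed comb {psi \<in> U. \<exists>x\<in>X. way_below comb psi x}"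
  unfolding info_directed_def
proof (intro conjI ballI)
  obtain x where "x \<in> X" using assms(2) unfolding info_directed_def by blast
  then show "{psi \<in> U. \<exists>x\<in>X. way_below comb psi x} \<noteq> {}"
    using assms(1) unfolding approximates_def info_directed_def by blast
next
  fix a b assume "a \<in> {psi \<in> U. \<exists>x\<in>X. way_below comb psi x}" "b \<in> {psi \<in> U. \<exists>x\<in>X. way_below comb psi x}"
  then obtain x1 x2 where a: "a \<in> U" "x1 \<in> X" "way_below comb a x1"
    and b: "b \<in> U" "x2 \<in> X" "way_below comb b x2" by blast
  obtain x3 where x3: "x3 \<in> X" "info_le comb x1 x3" "info_le comb x2 x3"
    using assms(2) a b unfolding info_directed_def by blast
  then have "a \<in> {psi \<in> U. way_below comb psi x3}" "b \<in> {psi \<in> U. way_below comb psi x3}"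
    using a b way_below_info_le_trans by auto
  then obtain c where "c \<in> {psi \<in> U. way_below comb psi x3}" "info_le comb a c" "info_le comb b c"
    using assms(1) unfolding approximates_def info_directed_def by blast
  then show "\<exists>c\<in>{psi \<in> U. \<exists>x\<in>X. way_below comb psi x}. info_le comb a c \<and> info_le comb b c"
    using x3 by blast
qed

lemma has_directed_sups_UNIV:
  assumes "approximates comb U" "has_directed_sups comb U"
  shows "has_directed_sups comb UNIV"
  unfolding has_directed_sups_def
proof (intro allI impI)
  fix X :: "'a set" assume "X \<subseteq> UNIV \<and> info_directed comb X"
  then have X: "info_directed comb X" ..
  define W where "W = {psi \<in> U. \<exists>x\<in>X. way_below comb psi x}"
  have "W \<subseteq> U" "info_directed comb W"
    unfolding W_def using directed_way_below_union[OF assms(1) X] by auto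
  then obtain s where s: "info_lub comb W s"
    using assms(2) unfolding has_directed_sups_def by blast
  have "info_le comb x s" if "x \<in> X" for x
  proof -
    have "info_lub comb {psi \<in> U. way_below comb psi x} x"
      using assms(1) unfolding approximates_def by blast
    moreover have "{psi \<in> U. way_below comb psi x} \<subseteq> W"
      using that unfolding W_def by blast
    ultimately show ?thesis using s unfolding info_lub_def by blast
  qed
  moreover have "info_le comb s u" if u: "\<forall>x\<in>X. info_le comb x u" for u
  proof -
    have "info_le comb w u" if "w \<in> W" for w
      using that u way_below_imp_info_le info_le_trans unfolding W_def by blast
    then show ?thesis
      using s unfolding info_lub_def by blast
  qed
  ultimately show "\<exists>s. info_lub comb X s"
    unfolding info_lub_def by blast
qed

lemma continuous_imp_approximates:
  assumes "continuous_ia comb foc e"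
  shows "\<exists>U. e \<in> U \<and> has_directed_sups comb U \<and> approximates comb U"
proof -
  obtain G where G: "e \<in> G" "\<forall>a\<in>G. \<forall>b\<in>G. comb a b \<in> G" "has_directed_sups comb G"
    "\<forall>phi. info_lub comb {psi \<in> G. way_below comb psi phi} phi"
    using assms unfolding continuous_ia_def has_directed_sups_def by blast
  have "info_directed comb {psi \<in> G. way_below comb psi phi}" for phi
    using directed_way_below_restricted[OF G(1,2), of "\<lambda>_. True"] by simp
  then show ?thesis
    using G unfolding approximates_def by blast
qed

lemma approximates_imp_continuous:
  assumes "e \<in> U" "has_directed_sups comb U" "approximates comb U"
  shows "continuous_ia comb foc e"
proof -
  have "info_lub comb {psi \<in> UNIV. way_below comb psi phi} phi" for phi
  proof (rule info_lub_superset)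
    show "info_lub comb {psi \<in> U. way_below comb psi phi} phi"
      using assms(3) unfolding approximates_def by blast
    show "{psi \<in> U. way_below comb psi phi} \<subseteq> {psi \<in> UNIV. way_below comb psi phi}"
      by blast
    show "\<forall>psi\<in>{psi \<in> UNIV. way_below comb psi phi}. info_le comb psi phi"
      using way_below_imp_info_le by blast
  qed
  then show ?thesis
    using has_directed_sups_UNIV[OF assms(3,2)]
    unfolding continuous_ia_def has_directed_sups_def by blast
qed

lemma s_continuous_imp_s_approximates:
  assumes "s_continuous_ia comb foc e"
  shows "\<exists>U. e \<in> U \<and> has_directed_sups comb U \<and> s_approximates comb foc U"
proof -
  obtain G where G: "e \<in> G" "\<forall>a\<in>G. \<forall>b\<in>G. comb a b \<in> G" "has_directed_sups comb G"
    "\<forall>phi x. info_lub comb {psi \<in> G. foc psi x = psi \<and> way_below comb psi phi} (foc phi x)"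
    using assms unfolding s_continuous_ia_def has_directed_sups_def by blast
  have "{psi \<in> G. foc psi x = psi \<and> way_below comb psi phi} =
      {psi \<in> G. psi = foc psi x \<and> way_below comb psi phi}" for phi x
    by auto
  moreover have "info_directed comb {psi \<in> G. psi = foc psi x \<and> way_below comb psi phi}" for phi x
    by (rule directed_way_below_restricted[OF G(1,2)]) (metis foc_e, metis foc_comb_fixed)
  ultimately show ?thesis
    using G unfolding s_approximates_def by auto
qed

lemma s_approximates_imp_approximates:
  assumes "s_approximates comb foc U"
  shows "approximates comb U"
  unfolding approximates_def
proof
  fix phi
  have "info_directed comb {psi \<in> U. psi = foc psi top \<and> way_below comb psi phi} \<and>
      info_lub comb {psi \<in> U. psi = foc psi top \<and> way_below comb psi phi} (foc phi top)"
    using assms unfolding s_approximates_def by blast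
  then show "info_directed comb {psi \<in> U. way_below comb psi phi} \<and>
      info_lub comb {psi \<in> U. way_below comb psi phi} phi"
    by (simp add: foc_top)
qed

lemma s_approximates_imp_s_continuous:
  assumes "e \<in> U" "has_directed_sups comb U" "s_approximates comb foc U"
  shows "s_continuous_ia comb foc e"
proof -
  have "info_lub comb {psi \<in> UNIV. foc psi x = psi \<and> way_below comb psi phi} (foc phi x)" for phi x
  proof (rule info_lub_superset)
    show "info_lub comb {psi \<in> U. psi = foc psi x \<and> way_below comb psi phi} (foc phi x)"
      using assms(3) unfolding s_approximates_def by blast
    show "{psi \<in> U. psi = foc psi x \<and> way_below comb psi phi} \<subseteq>
        {psi \<in> UNIV. foc psi x = psi \<and> way_below comb psi phi}"
      by auto
    show "\<forall>psi\<in>{psi \<in> UNIV. foc psi x = psi \<and> way_below comb psi phi}. info_le comb psi (foc phi x)"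
      using way_below_imp_info_le foc_mono by (metis (mono_tags, lifting) mem_Collect_eq)
  qed
  then show ?thesis
    using has_directed_sups_UNIV[OF s_approximates_imp_approximates[OF assms(3)] assms(2)]
    unfolding s_continuous_ia_def has_directed_sups_def by blast
qed

theorem continuous_iff_approximating_set:
  "continuous_ia comb foc e \<longleftrightarrow> (\<exists>U. e \<in> U \<and> has_directed_sups comb U \<and> approximates comb U)"
  using continuous_imp_approximates approximates_imp_continuous by (metis (no_types))

theorem s_continuous_iff_s_approximating_set:
  "s_continuous_ia comb foc e \<longleftrightarrow> (\<exists>U. e \<in> U \<and> has_directed_sups comb U \<and> s_approximates comb foc U)"
  using s_continuous_imp_s_approximates s_approximates_imp_s_continuous by (metis (no_types))

end

theorem proposition3p6:
  fixes comb :: "'a \<Rightarrow> 'a \<Rightarrow> 'a" and foc :: "'a \<Rightarrow> 'd::{lattice,order_top} \<Rightarrow> 'a" and e :: 'a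
  assumes "info_algebra comb foc e"
  shows "(continuous_ia comb foc e \<longleftrightarrow>
           (\<exists>U. e \<in> U \<and>
              (\<forall>X. X \<subseteq> U \<and> info_directed comb X \<longrightarrow> (\<exists>s. info_lub comb X s)) \<and>
              (\<forall>phi. info_directed comb {psi \<in> U. way_below comb psi phi} \<and>
                     info_lub comb {psi \<in> U. way_below comb psi phi} phi)))
       \<and> (s_continuous_ia comb foc e \<longleftrightarrow>
           (\<exists>U. e \<in> U \<and>
              (\<forall>X. X \<subseteq> U \<and> info_directed comb X \<longrightarrow> (\<exists>s. info_lub comb X s)) \<and>
              (\<forall>phi x. info_directed comb {psi \<in> U. psi = foc psi x \<and> way_below comb psi phi} \<and>
                     info_lub comb {psi \<in> U. psi = foc psi x \<and> way_below comb psi phi} (foc phi x))))"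
proof -
  interpret info_alg comb foc e
    by (fact info_alg.intro[OF assms])
  show ?thesis
    using continuous_iff_approximating_set s_continuous_iff_s_approximating_set
    unfolding has_directed_sups_def approximates_def s_approximates_def by simp
qed

end
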